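(* Every finite lattice $S$ is isomorphic to the skeleton $S(D)$ of some finite distributive lattice $D$.
   Context: For a modular lattice $M$ of finite length, an interval $[a,b]$ is \emph{atomistic} if every element of it is a join of atoms of $[a,b]$ (elements covering $a$); the \emph{skeleton} $S(M)$ is the set of least elements of the maximal (under inclusion) atomistic intervals of $M$, ordered as in $M$ (it is a lattice). *)

theory Defs
  imports Main
begin

definition partial_order_on' :: "'b set \<Rightarrow> ('b \<Rightarrow> 'b \<Rightarrow> bool) \<Rightarrow> bool" where
  "partial_order_on' D le \<longleftrightarrow>
     (\<forall>x\<in>D. le x x) \<and>
     (\<forall>x\<in>D. \<forall>y\<in>D. le x y \<and> le y x \<longrightarrow> x = y) \<and>
     (\<forall>x\<in>D. \<forall>y\<in>D. \<forall>z\<in>D. le x y \<and> le y z \<longrightarrow> le x z)"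

definition is_lub_in :: "'b set \<Rightarrow> ('b \<Rightarrow> 'b \<Rightarrow> bool) \<Rightarrow> 'b set \<Rightarrow> 'b \<Rightarrow> bool" where
  "is_lub_in C le A z \<longleftrightarrow> z \<in> C \<and> (\<forall>a\<in>A. le a z) \<and> (\<forall>w\<in>C. (\<forall>a\<in>A. le a w) \<longrightarrow> le z w)"

definition is_glb_in :: "'b set \<Rightarrow> ('b \<Rightarrow> 'b \<Rightarrow> bool) \<Rightarrow> 'b set \<Rightarrow> 'b \<Rightarrow> bool" where
  "is_glb_in C le A z \<longleftrightarrow> z \<in> C \<and> (\<forall>a\<in>A. le z a) \<and> (\<forall>w\<in>C. (\<forall>a\<in>A. le w a) \<longrightarrow> le w z)"

definition lattice_on :: "'b set \<Rightarrow> ('b \<Rightarrow> 'b \<Rightarrow> bool) \<Rightarrow> bool" where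
  "lattice_on D le \<longleftrightarrow> D \<noteq> {} \<and> partial_order_on' D le \<and>
     (\<forall>x\<in>D. \<forall>y\<in>D. (\<exists>z. is_lub_in D le {x, y} z) \<and> (\<exists>z. is_glb_in D le {x, y} z))"

definition join_on :: "'b set \<Rightarrow> ('b \<Rightarrow> 'b \<Rightarrow> bool) \<Rightarrow> 'b \<Rightarrow> 'b \<Rightarrow> 'b" where
  "join_on D le x y = (THE z. is_lub_in D le {x, y} z)"

definition meet_on :: "'b set \<Rightarrow> ('b \<Rightarrow> 'b \<Rightarrow> bool) \<Rightarrow> 'b \<Rightarrow> 'b \<Rightarrow> 'b" where
  "meet_on D le x y = (THE z. is_glb_in D le {x, y} z)"

definition distributive_lattice_on :: "'b set \<Rightarrow> ('b \<Rightarrow> 'b \<Rightarrow> bool) \<Rightarrow> bool" where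
  "distributive_lattice_on D le \<longleftrightarrow> lattice_on D le \<and>
     (\<forall>x\<in>D. \<forall>y\<in>D. \<forall>z\<in>D.
        meet_on D le x (join_on D le y z) = join_on D le (meet_on D le x y) (meet_on D le x z))"

definition interval_on :: "'b set \<Rightarrow> ('b \<Rightarrow> 'b \<Rightarrow> bool) \<Rightarrow> 'b \<Rightarrow> 'b \<Rightarrow> 'b set" where
  "interval_on D le a b = {x \<in> D. le a x \<and> le x b}"

definition covers_on :: "'b set \<Rightarrow> ('b \<Rightarrow> 'b \<Rightarrow> bool) \<Rightarrow> 'b \<Rightarrow> 'b \<Rightarrow> bool" where
  "covers_on D le a c \<longleftrightarrow> a \<in> D \<and> c \<in> D \<and> le a c \<and> a \<noteq> c \<and>
     (\<forall>x\<in>D. le a x \<and> le x c \<longrightarrow> x = a \<or> x = c)"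

definition interval_atoms :: "'b set \<Rightarrow> ('b \<Rightarrow> 'b \<Rightarrow> bool) \<Rightarrow> 'b \<Rightarrow> 'b \<Rightarrow> 'b set" where
  "interval_atoms D le a b = {c \<in> interval_on D le a b. covers_on D le a c}"

text \<open>[a,b] (with a \<le> b) is atomistic: every element is a join (in [a,b], equivalently in D)
  of a set of atoms of [a,b] (the empty join being a)\<close>
definition atomistic_interval :: "'b set \<Rightarrow> ('b \<Rightarrow> 'b \<Rightarrow> bool) \<Rightarrow> 'b \<Rightarrow> 'b \<Rightarrow> bool" where
  "atomistic_interval D le a b \<longleftrightarrow> a \<in> D \<and> b \<in> D \<and> le a b \<and>
     (\<forall>x\<in>interval_on D le a b. \<exists>A \<subseteq> interval_atoms D le a b.
        is_lub_in (interval_on D le a b) le A x)"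

definition maximal_atomistic_interval :: "'b set \<Rightarrow> ('b \<Rightarrow> 'b \<Rightarrow> bool) \<Rightarrow> 'b \<Rightarrow> 'b \<Rightarrow> bool" where
  "maximal_atomistic_interval D le a b \<longleftrightarrow> atomistic_interval D le a b \<and>
     (\<forall>c d. atomistic_interval D le c d \<and> interval_on D le a b \<subseteq> interval_on D le c d
        \<longrightarrow> interval_on D le a b = interval_on D le c d)"

definition skeleton :: "'b set \<Rightarrow> ('b \<Rightarrow> 'b \<Rightarrow> bool) \<Rightarrow> 'b set" where
  "skeleton D le = {a. \<exists>b. maximal_atomistic_interval D le a b}"

end

theory Submission
  imports Defs "HOL-Library.Nat_Bijection" "HOL-Library.Countable"
begin

text \<open>
  Let \<open>S\<close> be a finite lattice and \<open>U s = {t. \<not> s \<le> t}\<close>, so that \<open>s \<mapsto> U s\<close> is an order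
  embedding of \<open>S\<close> into the subsets of \<open>S\<close>. Take the poset with minimal points \<open>low t\<close>
  (\<open>t \<in> S\<close>) and points \<open>high s\<close> lying above exactly the \<open>low t\<close> with \<open>t \<in> U s\<close>, and let \<open>D\<close>
  be its lattice of down-sets. In a lattice of down-sets, \<open>[A, B]\<close> is atomistic iff every
  point of \<open>B - A\<close> can be added to \<open>A\<close> on its own. Maximality then forces the bottom \<open>A\<close> of
  a maximal atomistic interval to contain no \<open>high\<close> point and to be a union of sets
  \<open>low ` U r\<close>, hence \<open>A = low ` U m\<close> for \<open>m\<close> the join of these \<open>r\<close>; conversely each
  \<open>low ` U s\<close> is the bottom of the maximal atomistic interval whose top adds all
  \<open>high r\<close> with \<open>r \<le> s\<close>. So the skeleton of \<open>D\<close> is \<open>{low ` U s | s. s \<in> S}\<close>, a copy of \<open>S\<close>.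
\<close>

lemma is_lub_in_unique:
  "partial_order_on' D le \<Longrightarrow> is_lub_in D le A x \<Longrightarrow> is_lub_in D le A y \<Longrightarrow> x = y"
  unfolding partial_order_on'_def is_lub_in_def by blast

lemma is_glb_in_unique:
  "partial_order_on' D le \<Longrightarrow> is_glb_in D le A x \<Longrightarrow> is_glb_in D le A y \<Longrightarrow> x = y"
  unfolding partial_order_on'_def is_glb_in_def by blast

lemma join_on_eqI: "partial_order_on' D le \<Longrightarrow> is_lub_in D le {x, y} z \<Longrightarrow> join_on D le x y = z"
  unfolding join_on_def by (blast intro: is_lub_in_unique)

lemma meet_on_eqI: "partial_order_on' D le \<Longrightarrow> is_glb_in D le {x, y} z \<Longrightarrow> meet_on D le x y = z"
  unfolding meet_on_def by (blast intro: is_glb_in_unique)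


section \<open>Lattices of finite sets of naturals, encoded as naturals\<close>

definition encoded_carrier :: "nat set set \<Rightarrow> nat set" where
  "encoded_carrier F = {n. set_decode n \<in> F}"

definition decoded_subset :: "nat \<Rightarrow> nat \<Rightarrow> bool" where
  "decoded_subset x y \<longleftrightarrow> set_decode x \<subseteq> set_decode y"

text \<open>Keep codes of finite sets opaque instead of unfolding them into sums of powers of two.\<close>
declare set_encode_insert [simp del]

lemma set_decode_eqD: "set_decode x = set_decode y \<Longrightarrow> x = y"
  by (metis set_decode_inverse)

locale set_lattice =
  fixes F :: "nat set set"
  assumes finite_family: "finite F"
    and finite_member: "X \<in> F \<Longrightarrow> finite X"
    and empty_mem: "{} \<in> F"
    and Un_mem: "X \<in> F \<Longrightarrow> Y \<in> F \<Longrightarrow> X \<union> Y \<in> F"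
    and Int_mem: "X \<in> F \<Longrightarrow> Y \<in> F \<Longrightarrow> X \<inter> Y \<in> F"
    and insert_step: "X \<in> F \<Longrightarrow> Y \<in> F \<Longrightarrow> X \<subset> Y \<Longrightarrow> \<exists>p\<in>Y - X. insert p X \<in> F"
begin

abbreviation carrier :: "nat set" where "carrier \<equiv> encoded_carrier F"

lemma mem_carrier_iff: "x \<in> carrier \<longleftrightarrow> set_decode x \<in> F"
  by (simp add: encoded_carrier_def)

lemma set_encode_mem: "X \<in> F \<Longrightarrow> set_encode X \<in> carrier"
  by (simp add: mem_carrier_iff finite_member)

lemma set_decode_encode: "X \<in> F \<Longrightarrow> set_decode (set_encode X) = X"
  by (simp add: finite_member)

lemma finite_carrier: "finite carrier"
proof -
  have "carrier \<subseteq> set_encode ` F"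
    by (auto simp: mem_carrier_iff) (metis image_eqI set_decode_inverse)
  then show ?thesis
    using finite_family finite_subset by blast
qed

lemma partial_order: "partial_order_on' carrier decoded_subset"
  unfolding partial_order_on'_def decoded_subset_def using set_decode_eqD by blast

lemma is_lub_Un:
  "x \<in> carrier \<Longrightarrow> y \<in> carrier \<Longrightarrow> is_lub_in carrier decoded_subset {x, y} (set_encode (set_decode x \<union> set_decode y))"
  unfolding is_lub_in_def decoded_subset_def
  using Un_mem[of "set_decode x" "set_decode y"] by (auto simp: mem_carrier_iff)

lemma is_glb_Int:
  "x \<in> carrier \<Longrightarrow> y \<in> carrier \<Longrightarrow> is_glb_in carrier decoded_subset {x, y} (set_encode (set_decode x \<inter> set_decode y))"
  unfolding is_glb_in_def decoded_subset_def
  using Int_mem[of "set_decode x" "set_decode y"] by (auto simp: mem_carrier_iff)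

lemma distributive_lattice: "distributive_lattice_on carrier decoded_subset"
proof -
  have "set_encode {} \<in> carrier"
    using empty_mem by (rule set_encode_mem)
  then have lattice: "lattice_on carrier decoded_subset"
    unfolding lattice_on_def using partial_order is_lub_Un is_glb_Int by blast
  have join: "join_on carrier decoded_subset x y = set_encode (set_decode x \<union> set_decode y)"
    and meet: "meet_on carrier decoded_subset x y = set_encode (set_decode x \<inter> set_decode y)"
    if "x \<in> carrier" "y \<in> carrier" for x y
    using that partial_order is_lub_Un is_glb_Int by (blast intro: join_on_eqI meet_on_eqI)+
  have "meet_on carrier decoded_subset x (join_on carrier decoded_subset y z) =
        join_on carrier decoded_subset (meet_on carrier decoded_subset x y) (meet_on carrier decoded_subset x z)"
    if "x \<in> carrier" "y \<in> carrier" "z \<in> carrier" for x y z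
  proof -
    have "set_encode (set_decode y \<union> set_decode z) \<in> carrier"
      "set_encode (set_decode x \<inter> set_decode y) \<in> carrier"
      "set_encode (set_decode x \<inter> set_decode z) \<in> carrier"
      using that Un_mem Int_mem by (auto simp: mem_carrier_iff)
    with that show ?thesis
      by (simp add: join meet finite_member mem_carrier_iff Int_Un_distrib)
  qed
  with lattice show ?thesis
    unfolding distributive_lattice_on_def by blast
qed

lemma mem_interval_iff:
  "x \<in> interval_on carrier decoded_subset a b \<longleftrightarrow>
     x \<in> carrier \<and> set_decode a \<subseteq> set_decode x \<and> set_decode x \<subseteq> set_decode b"
  by (simp add: interval_on_def decoded_subset_def)

lemma Un_Union_mem: "finite G \<Longrightarrow> G \<subseteq> F \<Longrightarrow> X \<in> F \<Longrightarrow> X \<union> \<Union>G \<in> F"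
proof (induction G rule: finite_induct)
  case (insert Y G)
  then have "Y \<union> (X \<union> \<Union>G) \<in> F"
    using Un_mem by simp
  then show ?case
    by (simp add: Un_left_commute)
qed simp

lemma atomistic_intervalI:
  assumes a: "a \<in> carrier" and b: "b \<in> carrier" and ab: "set_decode a \<subseteq> set_decode b"
    and steps: "\<forall>p \<in> set_decode b - set_decode a. insert p (set_decode a) \<in> F"
  shows "atomistic_interval carrier decoded_subset a b"
  unfolding atomistic_interval_def
proof (intro conjI ballI)
  show "a \<in> carrier" "b \<in> carrier" "decoded_subset a b"
    using a b ab by (auto simp: decoded_subset_def)
  fix x assume x: "x \<in> interval_on carrier decoded_subset a b"
  then have ax: "set_decode a \<subseteq> set_decode x" and xb: "set_decode x \<subseteq> set_decode b"
    by (auto simp: mem_interval_iff)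
  define atom where "atom p = set_encode (insert p (set_decode a))" for p
  have atom_mem: "insert p (set_decode a) \<in> F" and decode_atom: "set_decode (atom p) = insert p (set_decode a)"
    if "p \<in> set_decode x - set_decode a" for p
    using that steps xb atom_def set_decode_encode by auto
  let ?A = "atom ` (set_decode x - set_decode a)"
  have "?A \<subseteq> interval_atoms carrier decoded_subset a b"
  proof
    fix c assume "c \<in> ?A"
    then obtain p where p: "p \<in> set_decode x - set_decode a" and c: "c = atom p"
      by blast
    have "z = a \<or> z = c"
      if "z \<in> carrier" "decoded_subset a z" "decoded_subset z c" for z
    proof -
      have "set_decode a \<subseteq> set_decode z" "set_decode z \<subseteq> insert p (set_decode a)"
        using that c decode_atom[OF p] by (auto simp: decoded_subset_def)
      then have "set_decode z = set_decode a \<or> set_decode z = set_decode c"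
        using c decode_atom[OF p] by (cases "p \<in> set_decode z") auto
      then show ?thesis
        using set_decode_eqD by blast
    qed
    moreover have "c \<in> carrier"
      using c atom_def atom_mem[OF p] set_encode_mem by simp
    moreover have "a \<noteq> c"
      using c decode_atom[OF p] p by auto
    ultimately show "c \<in> interval_atoms carrier decoded_subset a b"
      unfolding interval_atoms_def covers_on_def using a c decode_atom[OF p] p xb ab
      by (auto simp: mem_interval_iff decoded_subset_def)
  qed
  moreover have "is_lub_in (interval_on carrier decoded_subset a b) decoded_subset ?A x"
    unfolding is_lub_in_def
  proof (intro conjI ballI impI)
    show "x \<in> interval_on carrier decoded_subset a b"
      by (rule x)
    show "decoded_subset c x" if "c \<in> ?A" for c
      using that decode_atom ax by (auto simp: decoded_subset_def)
    show "decoded_subset x w"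
      if w: "w \<in> interval_on carrier decoded_subset a b" and above: "\<forall>c\<in>?A. decoded_subset c w" for w
      unfolding decoded_subset_def
    proof
      fix q assume q: "q \<in> set_decode x"
      show "q \<in> set_decode w"
      proof (cases "q \<in> set_decode a")
        case True
        then show ?thesis
          using w by (auto simp: mem_interval_iff)
      next
        case False
        then have "decoded_subset (atom q) w"
          using above q by blast
        then show ?thesis
          using decode_atom q False by (auto simp: decoded_subset_def)
      qed
    qed
  qed
  ultimately show "\<exists>A\<subseteq>interval_atoms carrier decoded_subset a b.
      is_lub_in (interval_on carrier decoded_subset a b) decoded_subset A x"
    by blast
qed

lemma covers_on_insert:
  assumes "covers_on carrier decoded_subset a c"
  obtains q where "q \<notin> set_decode a" "set_decode c = insert q (set_decode a)"
proof -
  have a: "a \<in> carrier" and c: "c \<in> carrier" and ac: "set_decode a \<subset> set_decode c"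
    and between: "\<forall>z\<in>carrier. decoded_subset a z \<and> decoded_subset z c \<longrightarrow> z = a \<or> z = c"
    using assms unfolding covers_on_def decoded_subset_def using set_decode_eqD by blast+
  obtain q where q: "q \<in> set_decode c - set_decode a" and q_mem: "insert q (set_decode a) \<in> F"
    using insert_step[OF _ _ ac] a c by (auto simp: mem_carrier_iff)
  let ?z = "set_encode (insert q (set_decode a))"
  have "?z = a \<or> ?z = c"
  proof (rule between[rule_format])
    show "?z \<in> carrier"
      using q_mem by (rule set_encode_mem)
    show "decoded_subset a ?z \<and> decoded_subset ?z c"
      using q ac by (auto simp: decoded_subset_def set_decode_encode[OF q_mem])
  qed
  moreover have "?z \<noteq> a"
  proof
    assume "?z = a"
    then have "set_decode a = insert q (set_decode a)"
      using set_decode_encode[OF q_mem] by simp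
    then show False
      using q by blast
  qed
  ultimately have "set_decode c = insert q (set_decode a)"
    using set_decode_encode[OF q_mem] by auto
  with q show thesis
    by (intro that) auto
qed

text \<open>The atoms of \<open>[a, b]\<close> must cover \<open>b - a\<close>, since their union with \<open>a\<close> is an upper bound.\<close>
lemma atomistic_interval_insert_mem:
  assumes ab: "atomistic_interval carrier decoded_subset a b"
    and p: "p \<in> set_decode b - set_decode a"
  shows "insert p (set_decode a) \<in> F"
proof -
  have a: "a \<in> carrier" and "b \<in> carrier" and "set_decode a \<subseteq> set_decode b"
    using ab by (auto simp: atomistic_interval_def decoded_subset_def)
  then have "b \<in> interval_on carrier decoded_subset a b"
    by (simp add: mem_interval_iff)
  then obtain A where A: "A \<subseteq> interval_atoms carrier decoded_subset a b"
    and lub: "is_lub_in (interval_on carrier decoded_subset a b) decoded_subset A b"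
    using ab unfolding atomistic_interval_def by blast
  have A_carrier: "A \<subseteq> carrier"
    using A by (auto simp: interval_atoms_def mem_interval_iff)
  let ?W = "set_decode a \<union> \<Union>(set_decode ` A)"
  have "finite A"
    using A_carrier finite_carrier by (rule finite_subset)
  moreover have "set_decode ` A \<subseteq> F"
    using A_carrier by (auto simp: mem_carrier_iff)
  ultimately have W: "?W \<in> F"
    using Un_Union_mem[of "set_decode ` A" "set_decode a"] a by (simp add: mem_carrier_iff)
  have "set_encode ?W \<in> interval_on carrier decoded_subset a b"
    using W A \<open>set_decode a \<subseteq> set_decode b\<close>
    by (auto simp: mem_interval_iff set_decode_encode set_encode_mem interval_atoms_def)
  moreover have "\<forall>c\<in>A. decoded_subset c (set_encode ?W)"
    using W by (auto simp: decoded_subset_def set_decode_encode)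
  ultimately have "decoded_subset b (set_encode ?W)"
    using lub unfolding is_lub_in_def by blast
  then obtain c where c: "c \<in> A" and pc: "p \<in> set_decode c"
    using p W by (auto simp: decoded_subset_def set_decode_encode)
  then have "covers_on carrier decoded_subset a c"
    using A by (auto simp: interval_atoms_def)
  then obtain q where "set_decode c = insert q (set_decode a)"
    by (rule covers_on_insert)
  moreover have "set_decode c \<in> F"
    using A_carrier c by (auto simp: mem_carrier_iff)
  ultimately show ?thesis
    using p pc by auto
qed

text \<open>Otherwise \<open>[set_encode C, b]\<close> would be a larger atomistic interval.\<close>
lemma maximal_atomistic_bottom_minimal:
  assumes max: "maximal_atomistic_interval carrier decoded_subset a b"
    and C: "C \<in> F" "C \<subseteq> set_decode a"
    and steps: "\<forall>p\<in>set_decode b - C. insert p C \<in> F"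
  shows "C = set_decode a"
proof -
  have ab: "atomistic_interval carrier decoded_subset a b"
    and maximal: "\<And>c d. atomistic_interval carrier decoded_subset c d \<Longrightarrow>
        interval_on carrier decoded_subset a b \<subseteq> interval_on carrier decoded_subset c d \<Longrightarrow>
        interval_on carrier decoded_subset a b = interval_on carrier decoded_subset c d"
    using max unfolding maximal_atomistic_interval_def by blast+
  have b: "b \<in> carrier" and a_b: "set_decode a \<subseteq> set_decode b"
    using ab by (auto simp: atomistic_interval_def decoded_subset_def)
  let ?c = "set_encode C"
  have c: "?c \<in> carrier" and decode_c: "set_decode ?c = C"
    using C set_encode_mem set_decode_encode by auto
  have "atomistic_interval carrier decoded_subset ?c b"
    using atomistic_intervalI[OF c b] decode_c steps C a_b by auto
  moreover have "interval_on carrier decoded_subset a b \<subseteq> interval_on carrier decoded_subset ?c b"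
  proof
    fix x assume "x \<in> interval_on carrier decoded_subset a b"
    then have "x \<in> carrier" "set_decode a \<subseteq> set_decode x" "set_decode x \<subseteq> set_decode b"
      by (simp_all add: mem_interval_iff)
    then show "x \<in> interval_on carrier decoded_subset ?c b"
      using C(2) by (simp add: mem_interval_iff decode_c)
  qed
  ultimately have "interval_on carrier decoded_subset a b = interval_on carrier decoded_subset ?c b"
    by (rule maximal)
  moreover have "?c \<in> interval_on carrier decoded_subset ?c b"
    using c order_trans[OF C(2) a_b] by (simp add: mem_interval_iff decode_c)
  ultimately have "?c \<in> interval_on carrier decoded_subset a b"
    by simp
  then have "set_decode a \<subseteq> C"
    by (simp add: mem_interval_iff decode_c)
  with C(2) show ?thesis
    by (rule subset_antisym)
qed


lemma maximal_atomistic_intervalI: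
  assumes ab: "atomistic_interval carrier decoded_subset a b"
    and extremal: "\<And>c d. atomistic_interval carrier decoded_subset c d \<Longrightarrow>
        set_decode c \<subseteq> set_decode a \<Longrightarrow> set_decode b \<subseteq> set_decode d \<Longrightarrow> c = a \<and> d = b"
  shows "maximal_atomistic_interval carrier decoded_subset a b"
  unfolding maximal_atomistic_interval_def
proof (intro conjI allI impI ab)
  fix c d
  assume cd: "atomistic_interval carrier decoded_subset c d \<and>
    interval_on carrier decoded_subset a b \<subseteq> interval_on carrier decoded_subset c d"
  have "a \<in> interval_on carrier decoded_subset a b" "b \<in> interval_on carrier decoded_subset a b"
    using ab by (auto simp: atomistic_interval_def decoded_subset_def mem_interval_iff)
  then have "a \<in> interval_on carrier decoded_subset c d" "b \<in> interval_on carrier decoded_subset c d"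
    using cd by blast+
  then have "c = a \<and> d = b"
    using cd extremal[of c d] by (simp add: mem_interval_iff)
  then show "interval_on carrier decoded_subset a b = interval_on carrier decoded_subset c d"
    by simp
qed
end


section \<open>Down-sets of a depth-one poset built from a finite lattice\<close>

definition low :: "'a::countable \<Rightarrow> nat" where
  "low t = 2 * to_nat t"

definition high :: "'a::countable \<Rightarrow> nat" where
  "high s = Suc (2 * to_nat s)"

definition not_above :: "'a::order \<Rightarrow> 'a set" where
  "not_above s = {t. \<not> s \<le> t}"

text \<open>The down-sets of the poset on \<open>range low \<union> range high\<close> with \<open>low t < high s\<close> iff \<open>\<not> s \<le> t\<close>.\<close>
definition down_sets :: "'a::{countable,order} itself \<Rightarrow> nat set set" where
  "down_sets _ = {X. X \<subseteq> range (low :: 'a \<Rightarrow> nat) \<union> range (high :: 'a \<Rightarrow> nat) \<and>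
     (\<forall>s::'a. high s \<in> X \<longrightarrow> low ` not_above s \<subseteq> X)}"

lemma low_neq_high [simp]: "low t \<noteq> high s" "high s \<noteq> low t"
  unfolding low_def high_def by presburger+

lemma low_eq_iff [simp]: "low t = low u \<longleftrightarrow> t = u"
  by (simp add: low_def)

lemma high_eq_iff [simp]: "high s = high r \<longleftrightarrow> s = r"
  by (simp add: high_def)

lemma not_above_subset_iff: "not_above x \<subseteq> not_above y \<longleftrightarrow> x \<le> y"
  unfolding not_above_def using order_trans by auto

lemma not_above_Sup_fin:
  "finite R \<Longrightarrow> R \<noteq> {} \<Longrightarrow> not_above (Sup_fin R) = (\<Union>r\<in>R. not_above r)"
  by (auto simp: not_above_def Sup_fin.bounded_iff)

lemma ex_not_above_eq:
  fixes T :: "'a::{finite,lattice} set"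
  assumes "\<And>t. t \<in> T \<Longrightarrow> \<exists>r. t \<in> not_above r \<and> not_above r \<subseteq> T"
  shows "\<exists>m. not_above m = T"
proof -
  let ?R = "{r. not_above r \<subseteq> T}"
  have "Inf_fin UNIV \<in> ?R"
    by (auto simp: not_above_def intro: Inf_fin.coboundedI)
  then have "not_above (Sup_fin ?R) = (\<Union>r\<in>?R. not_above r)"
    by (intro not_above_Sup_fin) auto
  also have "\<dots> = T"
    using assms by blast
  finally show ?thesis ..
qed

lemma mem_down_sets_iff:
  "X \<in> down_sets TYPE('a::{countable,order}) \<longleftrightarrow>
     X \<subseteq> range (low :: 'a \<Rightarrow> nat) \<union> range (high :: 'a \<Rightarrow> nat) \<and>
     (\<forall>s::'a. high s \<in> X \<longrightarrow> low ` not_above s \<subseteq> X)"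
  by (simp add: down_sets_def)

lemma subset_range_low_mem_down_sets:
  "X \<subseteq> range (low :: 'a \<Rightarrow> nat) \<Longrightarrow> X \<in> down_sets TYPE('a::{countable,order})"
  by (auto simp: mem_down_sets_iff)

lemma insert_low_mem_down_sets:
  "X \<in> down_sets TYPE('a::{countable,order}) \<Longrightarrow> insert (low (t::'a)) X \<in> down_sets TYPE('a)"
  by (auto simp: mem_down_sets_iff)

lemma low_image_subset_insert_high_iff [simp]:
  "low ` T \<subseteq> insert (high s) X \<longleftrightarrow> low ` T \<subseteq> X"
  by auto

lemma insert_high_mem_down_sets_iff:
  "X \<in> down_sets TYPE('a::{countable,order}) \<Longrightarrow>
     insert (high (s::'a)) X \<in> down_sets TYPE('a) \<longleftrightarrow> low ` not_above s \<subseteq> X"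
  by (auto simp: mem_down_sets_iff)

lemma Diff_high_mem_down_sets:
  "X \<in> down_sets TYPE('a::{countable,order}) \<Longrightarrow> X - {high (s::'a)} \<in> down_sets TYPE('a)"
  by (auto simp: mem_down_sets_iff)

lemma set_lattice_down_sets: "set_lattice (down_sets TYPE('a::{finite,order}))"
proof
  show "finite (down_sets TYPE('a))"
    by (rule finite_subset[of _ "Pow (range (low :: 'a \<Rightarrow> nat) \<union> range (high :: 'a \<Rightarrow> nat))"])
      (auto simp: mem_down_sets_iff)
  show "finite X" if "X \<in> down_sets TYPE('a)" for X
    using that by (auto simp: mem_down_sets_iff intro: finite_subset)
  fix C E assume C: "C \<in> down_sets TYPE('a)" and E: "E \<in> down_sets TYPE('a)" and CE: "C \<subset> E"
  show "\<exists>q\<in>E - C. insert q C \<in> down_sets TYPE('a)"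
  proof (cases "\<exists>t::'a. low t \<in> E - C")
    case True
    then show ?thesis
      using insert_low_mem_down_sets[OF C] by blast
  next
    case False
    obtain q where q: "q \<in> E - C"
      using CE by blast
    then obtain s :: 'a where s: "q = high s"
      using E False by (auto simp: mem_down_sets_iff)
    have "low ` not_above s \<subseteq> E"
      using E q s by (auto simp: mem_down_sets_iff)
    then have "low ` not_above s \<subseteq> C"
      using False by blast
    then show ?thesis
      using q s insert_high_mem_down_sets_iff[OF C] by blast
  qed
qed (unfold mem_down_sets_iff; blast)+

interpretation down_sets: set_lattice "down_sets TYPE('a::{finite,order})"
  by (rule set_lattice_down_sets)


section \<open>The skeleton of the lattice of down-sets\<close>

lemma high_notin_maximal_atomistic_bottom:
  assumes max: "maximal_atomistic_interval (down_sets.carrier TYPE('a::{finite,order}))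
      decoded_subset a b"
  shows "high (r::'a) \<notin> set_decode a"
proof
  assume r: "high r \<in> set_decode a"
  have ab: "atomistic_interval (down_sets.carrier TYPE('a)) decoded_subset a b"
    using max by (simp add: maximal_atomistic_interval_def)
  have A: "set_decode a \<in> down_sets TYPE('a)"
    using ab by (auto simp: atomistic_interval_def down_sets.mem_carrier_iff)
  let ?C = "set_decode a - {high r}"
  have "\<forall>p\<in>set_decode b - ?C. insert p ?C \<in> down_sets TYPE('a)"
  proof
    fix p assume p: "p \<in> set_decode b - ?C"
    show "insert p ?C \<in> down_sets TYPE('a)"
    proof (cases "p = high r")
      case True
      then show ?thesis
        using A r by (simp add: insert_absorb)
    next
      case False
      then have "insert p ?C = insert p (set_decode a) - {high r}"
        by auto
      then show ?thesis
        using down_sets.atomistic_interval_insert_mem[OF ab] p False Diff_high_mem_down_sets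
        by auto
    qed
  qed
  then have "?C = set_decode a"
    using down_sets.maximal_atomistic_bottom_minimal[OF max] Diff_high_mem_down_sets[OF A]
    by blast
  then show False
    using r by blast
qed

text \<open>Removing a low point \<open>low t\<close> from the bottom keeps every single-point extension inside the
  family, unless \<open>t\<close> lies in some \<open>not_above r\<close> all of whose low points are in the bottom.\<close>
lemma maximal_atomistic_bottom_covered:
  assumes max: "maximal_atomistic_interval (down_sets.carrier TYPE('a::{finite,order}))
      decoded_subset a b"
    and t: "low (t::'a) \<in> set_decode a"
  shows "\<exists>r. t \<in> not_above r \<and> not_above r \<subseteq> low -` set_decode a"
proof (rule ccontr)
  assume uncovered: "\<nexists>r. t \<in> not_above r \<and> not_above r \<subseteq> low -` set_decode a"
  have ab: "atomistic_interval (down_sets.carrier TYPE('a)) decoded_subset a b"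
    using max by (simp add: maximal_atomistic_interval_def)
  have A: "set_decode a \<in> down_sets TYPE('a)"
    using ab by (auto simp: atomistic_interval_def down_sets.mem_carrier_iff)
  let ?C = "set_decode a - {low t}"
  have C_low: "?C \<subseteq> range (low :: 'a \<Rightarrow> nat)"
    using A high_notin_maximal_atomistic_bottom[OF max] by (auto simp: mem_down_sets_iff)
  have "\<forall>p\<in>set_decode b - ?C. insert p ?C \<in> down_sets TYPE('a)"
  proof
    fix p assume p: "p \<in> set_decode b - ?C"
    show "insert p ?C \<in> down_sets TYPE('a)"
    proof (cases "p = low t")
      case True
      then show ?thesis
        using A t by (simp add: insert_absorb)
    next
      case False
      then have p_ext: "insert p (set_decode a) \<in> down_sets TYPE('a)"
        using p down_sets.atomistic_interval_insert_mem[OF ab] by auto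
      then consider u :: 'a where "p = low u" | r :: 'a where "p = high r"
        unfolding mem_down_sets_iff by blast
      then show ?thesis
      proof cases
        case 1
        then show ?thesis
          using C_low subset_range_low_mem_down_sets by (metis insert_subset rangeI)
      next
        case (2 r)
        have r_low: "low ` not_above r \<subseteq> set_decode a"
          using p_ext 2 A insert_high_mem_down_sets_iff by blast
        then have "t \<notin> not_above r"
          using uncovered by (auto simp: image_subset_iff_subset_vimage)
        with r_low have "low ` not_above r \<subseteq> ?C"
          by auto
        then show ?thesis
          using 2 insert_high_mem_down_sets_iff subset_range_low_mem_down_sets[OF C_low] by blast
      qed
    qed
  qed
  then have "?C = set_decode a"
    using down_sets.maximal_atomistic_bottom_minimal[OF max]
      subset_range_low_mem_down_sets[OF C_low] by blast
  then show False
    using t by blast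
qed

lemma skeleton_down_sets_subset:
  "skeleton (down_sets.carrier TYPE('a::{finite,lattice})) decoded_subset
     \<subseteq> range (\<lambda>s::'a. set_encode (low ` not_above s))"
proof
  fix a assume "a \<in> skeleton (down_sets.carrier TYPE('a)) decoded_subset"
  then obtain b where max: "maximal_atomistic_interval
      (down_sets.carrier TYPE('a)) decoded_subset a b"
    unfolding skeleton_def by blast
  then have "set_decode a \<in> down_sets TYPE('a)"
    by (auto simp: maximal_atomistic_interval_def atomistic_interval_def down_sets.mem_carrier_iff)
  then have "set_decode a \<subseteq> range (low :: 'a \<Rightarrow> nat) \<union> range (high :: 'a \<Rightarrow> nat)"
    by (simp add: mem_down_sets_iff)
  then have "set_decode a \<subseteq> range (low :: 'a \<Rightarrow> nat)"
    using high_notin_maximal_atomistic_bottom[OF max] by blast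
  then have a_low: "set_decode a = low ` (low -` set_decode a :: 'a set)"
    by (simp add: image_vimage_eq Int_absorb2)
  obtain m :: 'a where "not_above m = low -` set_decode a"
    using ex_not_above_eq maximal_atomistic_bottom_covered[OF max] by (metis vimageE)
  then have "a = set_encode (low ` not_above m)"
    using a_low by (metis set_decode_inverse)
  then show "a \<in> range (\<lambda>s::'a. set_encode (low ` not_above s))"
    by blast
qed

lemma atomistic_interval_not_above:
  fixes s :: "'a::{finite,order}"
  defines "A \<equiv> low ` not_above s" and "B \<equiv> range (low :: 'a \<Rightarrow> nat) \<union> high ` {r. r \<le> s}"
  shows "atomistic_interval (down_sets.carrier TYPE('a)) decoded_subset (set_encode A) (set_encode B)"
proof -
  have A: "A \<in> down_sets TYPE('a)"
    unfolding A_def by (auto intro: subset_range_low_mem_down_sets)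
  have B: "B \<in> down_sets TYPE('a)"
    unfolding B_def by (auto simp: mem_down_sets_iff)
  have steps: "insert p A \<in> down_sets TYPE('a)" if "p \<in> B - A" for p
  proof -
    from that consider t :: 'a where "p = low t" | r where "p = high r" "r \<le> s"
      unfolding B_def by blast
    then show ?thesis
    proof cases
      case 1
      then show ?thesis
        using insert_low_mem_down_sets[OF A] by simp
    next
      case 2
      then show ?thesis
        using insert_high_mem_down_sets_iff[OF A] not_above_subset_iff image_mono
        unfolding A_def by blast
    qed
  qed
  have "A \<subseteq> B"
    unfolding A_def B_def by auto
  with A B steps show ?thesis
    by (intro down_sets.atomistic_intervalI) (auto simp: down_sets.set_encode_mem down_sets.set_decode_encode)
qed

text \<open>
  An atomistic interval \<open>[C, E]\<close> around \<open>[A, B]\<close> must have \<open>C = A\<close>, since \<open>high s\<close> can be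
  added to \<open>C\<close>, and \<open>E = B\<close>, since every \<open>high r\<close> in \<open>E\<close> can then be added to \<open>A\<close>.
\<close>
lemma maximal_atomistic_not_above:
  fixes s :: "'a::{finite,order}"
  defines "A \<equiv> low ` not_above s" and "B \<equiv> range (low :: 'a \<Rightarrow> nat) \<union> high ` {r. r \<le> s}"
  shows "maximal_atomistic_interval (down_sets.carrier TYPE('a)) decoded_subset
      (set_encode A) (set_encode B)"
proof (rule down_sets.maximal_atomistic_intervalI)
  show "atomistic_interval (down_sets.carrier TYPE('a)) decoded_subset (set_encode A) (set_encode B)"
    unfolding A_def B_def by (rule atomistic_interval_not_above)
  have A: "A \<in> down_sets TYPE('a)"
    unfolding A_def by (auto intro: subset_range_low_mem_down_sets)
  have B: "B \<in> down_sets TYPE('a)"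
    unfolding B_def by (auto simp: mem_down_sets_iff)
  fix c d
  assume cd: "atomistic_interval (down_sets.carrier TYPE('a)) decoded_subset c d"
    and c_A: "set_decode c \<subseteq> set_decode (set_encode A)"
    and B_d: "set_decode (set_encode B) \<subseteq> set_decode d"
  have c_steps: "\<And>p. p \<in> set_decode d - set_decode c \<Longrightarrow> insert p (set_decode c) \<in> down_sets TYPE('a)"
    using cd down_sets.atomistic_interval_insert_mem by blast
  have c_A: "set_decode c \<subseteq> A" and B_d: "B \<subseteq> set_decode d"
    using c_A B_d A B by (simp_all add: down_sets.set_decode_encode)
  have d: "set_decode d \<in> down_sets TYPE('a)"
    using cd by (auto simp: atomistic_interval_def down_sets.mem_carrier_iff)
  have "high s \<in> set_decode d - set_decode c"
    using B_d c_A unfolding B_def A_def by auto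
  then have "A \<subseteq> set_decode c"
    using c_steps insert_high_mem_down_sets_iff c_A unfolding A_def by fastforce
  then have c_eq: "set_decode c = A"
    using c_A by blast
  have "set_decode d \<subseteq> B"
  proof
    fix q assume q: "q \<in> set_decode d"
    then consider t :: 'a where "q = low t" | r :: 'a where "q = high r"
      using d by (auto simp: mem_down_sets_iff)
    then show "q \<in> B"
    proof cases
      case (2 r)
      then have "insert (high r) A \<in> down_sets TYPE('a)"
        using c_steps q c_eq unfolding A_def by (auto simp: image_iff)
      then have "r \<le> s"
        using insert_high_mem_down_sets_iff[OF A]
        unfolding A_def by (simp add: inj_image_subset_iff inj_def not_above_subset_iff)
      then show ?thesis
        using 2 unfolding B_def by auto
    qed (auto simp: B_def)
  qed
  with c_eq B_d show "c = set_encode A \<and> d = set_encode B"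
    by (metis set_decode_inverse subset_antisym)
qed

lemma skeleton_down_sets:
  "skeleton (down_sets.carrier TYPE('a::{finite,lattice})) decoded_subset
     = range (\<lambda>s::'a. set_encode (low ` not_above s))"
  using skeleton_down_sets_subset maximal_atomistic_not_above
  by (fastforce simp: skeleton_def)

theorem theorem7p2:
  fixes S_witness :: "'a :: {finite, lattice} itself"
  shows "\<exists>(D :: nat set) (le :: nat \<Rightarrow> nat \<Rightarrow> bool) (f :: 'a \<Rightarrow> nat).
           finite D \<and> distributive_lattice_on D le \<and>
           bij_betw f (UNIV :: 'a set) (skeleton D le) \<and>
           (\<forall>x y. x \<le> y \<longleftrightarrow> le (f x) (f y))"
proof -
  define f where "f s = set_encode (low ` not_above s)" for s :: 'a
  have order_embedding: "x \<le> y \<longleftrightarrow> decoded_subset (f x) (f y)" for x y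
    by (simp add: f_def decoded_subset_def inj_image_subset_iff inj_def not_above_subset_iff)
  then have "inj f"
    by (intro injI) (metis order_antisym order_refl)
  then have "bij_betw f UNIV (skeleton (down_sets.carrier TYPE('a)) decoded_subset)"
    by (simp add: bij_betw_def skeleton_down_sets f_def)
  then show ?thesis
    using down_sets.finite_carrier down_sets.distributive_lattice order_embedding by blast
qed

end
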